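(* Let $\mathcal{G}\subset\mathcal{S}$ be closed under convolution (i.e. $f*F\in\mathcal{G}$ whenever $f,F\in\mathcal{G}$), and let $\mathcal{G}_H^0$ be its harmonic analogue. Then: (i) for every $f\in\mathcal{G}_H^0$, $f*f\in\mathcal{G}_H^0$; (ii) if $(f+F)/2\in\mathcal{G}$ for all $f,F\in\mathcal{G}$, then $\mathcal{G}_H^0$ is closed under convolution, i.e. $f_1*f_2\in\mathcal{G}_H^0$ for all $f_1,f_2\in\mathcal{G}_H^0$.
   Context: $\mathbb{D}$ is the open unit disk. $\mathcal{S}$ is the class of analytic univalent functions $f$ in $\mathbb{D}$ with $f(0)=0$, $f'(0)=1$. For $\mathcal{G}\subset\mathcal{S}$, its harmonic analogue $\mathcal{G}_H^0$ is the class of harmonic functions $f=h+\bar g$ ($h,g$ analytic in $\mathbb{D}$) such that $h+\epsilon g\in\mathcal{G}$ for every $\epsilon\in\mathbb{C}$ with $|\epsilon|=1$. For analytic $f(z)=\sum a_nz^n$, $F(z)=\sum A_nz^n$, the convolution (Hadamard product) is $(f*F)(z)=\sum a_nA_nz^n$. For harmonic $f=h+\bar g$, $F=H+\bar G$, the harmonic convolution is $f*F=h*H+\overline{g*G}$. *)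

theory Defs
  imports "HOL-Analysis.Analysis"
begin

abbreviation unit_disk :: "complex set" where
  "unit_disk \<equiv> ball 0 1"

text \<open>The class S of normalized univalent analytic functions on the unit disk.
  Functions are HOL functions complex => complex; only their values on the disk matter.\<close>
definition classS :: "(complex \<Rightarrow> complex) set" where
  "classS = {f. f holomorphic_on unit_disk \<and> inj_on f unit_disk \<and> f 0 = 0 \<and> deriv f 0 = 1}"

definition mem_D :: "(complex \<Rightarrow> complex) \<Rightarrow> (complex \<Rightarrow> complex) set \<Rightarrow> bool" where
  "mem_D h G \<longleftrightarrow> (\<exists>k\<in>G. \<forall>z\<in>unit_disk. k z = h z)"

definition coef :: "(complex \<Rightarrow> complex) \<Rightarrow> nat \<Rightarrow> complex" where
  "coef f n = (deriv ^^ n) f 0 / of_nat (fact n)"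

text \<open>Hadamard product (convolution) of analytic functions on the disk
  (set to 0 outside the disk, where it is irrelevant).\<close>
definition hconv :: "(complex \<Rightarrow> complex) \<Rightarrow> (complex \<Rightarrow> complex) \<Rightarrow> complex \<Rightarrow> complex" where
  "hconv f F z = (if z \<in> unit_disk then (\<Sum>n. coef f n * coef F n * z ^ n) else 0)"

text \<open>A harmonic function f = h + conj g is represented by the pair (h, g).
  Harmonic analogue of G: h, g analytic in D and h + eps*g in G for all |eps| = 1.\<close>
definition harm :: "(complex \<Rightarrow> complex) set \<Rightarrow> ((complex \<Rightarrow> complex) \<times> (complex \<Rightarrow> complex)) set" where
  "harm G = {(h, g). h holomorphic_on unit_disk \<and> g holomorphic_on unit_disk \<and>
     (\<forall>\<epsilon>::complex. cmod \<epsilon> = 1 \<longrightarrow> mem_D (\<lambda>z. h z + \<epsilon> * g z) G)}"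

text \<open>Harmonic convolution: (h + conj g) * (H + conj G) = h*H + conj (g*G).\<close>
definition hconvH :: "((complex \<Rightarrow> complex) \<times> (complex \<Rightarrow> complex)) \<Rightarrow>
    ((complex \<Rightarrow> complex) \<times> (complex \<Rightarrow> complex)) \<Rightarrow> ((complex \<Rightarrow> complex) \<times> (complex \<Rightarrow> complex))" where
  "hconvH p q = (hconv (fst p) (fst q), hconv (snd p) (snd q))"

end

theory Submission
  imports Defs "HOL-Complex_Analysis.Complex_Analysis"
begin

text \<open>
  The Hadamard product is bilinear and symmetric. For \<open>(h, g)\<close> in the harmonic analogue and
  \<open>\<eta>\<^sup>2 = -\<epsilon>\<close>, the functions \<open>h + \<eta> g\<close> and \<open>h - \<eta> g\<close> lie in \<open>\<G>\<close>, and their convolution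
  \<open>h*h - \<eta>\<^sup>2 g*g = h*h + \<epsilon> g*g\<close> lies in \<open>\<G>\<close>, since the cross terms cancel. For two different
  pairs the cross terms survive in \<open>(h\<^sub>1 + g\<^sub>1) * (h\<^sub>2 + \<epsilon> g\<^sub>2)\<close>, but averaging with
  \<open>(h\<^sub>1 - g\<^sub>1) * (h\<^sub>2 - \<epsilon> g\<^sub>2)\<close> removes them and leaves \<open>h\<^sub>1*h\<^sub>2 + \<epsilon> g\<^sub>1*g\<^sub>2\<close>.
\<close>

lemma conv_radius_coef_ge_1:
  assumes "h holomorphic_on unit_disk"
  shows "conv_radius (coef h) \<ge> 1"
proof (rule conv_radius_geI_ex')
  fix r :: real assume "0 < r" "ereal r < 1"
  then have "of_real r \<in> unit_disk" by simp
  from holomorphic_power_series[OF assms this]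
  show "summable (\<lambda>n. coef h n * of_real r ^ n)"
    by (simp add: coef_def sums_summable)
qed

lemma summable_norm_coef_mult_power:
  assumes "h holomorphic_on unit_disk" and "norm w < 1"
  shows "summable (\<lambda>n. norm (coef h n * w ^ n))"
proof (rule abs_summable_in_conv_radius)
  have "ereal (norm w) < 1" using assms(2) by simp
  then show "ereal (norm w) < conv_radius (coef h)"
    using conv_radius_coef_ge_1[OF assms(1)] by (meson less_le_trans)
qed

lemma summable_coef_mult_coef_power:
  assumes h: "h holomorphic_on unit_disk" and g: "g holomorphic_on unit_disk"
    and z: "norm z < 1"
  shows "summable (\<lambda>n. coef h n * coef g n * z ^ n)"
proof -
  define w where "w = csqrt z"
  have w: "norm w < 1" using z by (simp add: w_def norm_csqrt)
  have "w * w = z" by (metis power2_csqrt power2_eq_square w_def)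
  then have "w ^ n * w ^ n = z ^ n" for n by (metis power_mult_distrib)
  then have split: "coef h n * coef g n * z ^ n = (coef h n * w ^ n) * (coef g n * w ^ n)" for n
    by (metis mult.assoc mult.left_commute)
  have "Bseq (\<lambda>n. norm (coef h n * w ^ n))"
    using summable_norm_coef_mult_power[OF h w] by (rule summable_imp_Bseq)
  then obtain M where M: "\<And>n. norm (coef h n * w ^ n) \<le> M" unfolding Bseq_def by auto
  have "summable (\<lambda>n. M * norm (coef g n * w ^ n))"
    using summable_norm_coef_mult_power[OF g w] by (rule summable_mult)
  then have "summable (\<lambda>n. norm (coef h n * coef g n * z ^ n))"
    by (rule summable_comparison_test'[where N = 0])
      (simp add: split norm_mult[of "coef h _ * w ^ _"] mult_right_mono M del: norm_mult)
  then show ?thesis by (rule summable_norm_cancel)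
qed

lemma coef_add_cmult:
  assumes "a holomorphic_on unit_disk" and "b holomorphic_on unit_disk"
  shows "coef (\<lambda>z. a z + c * b z) n = coef a n + c * coef b n"
proof -
  have cb: "(\<lambda>z. c * b z) holomorphic_on unit_disk" using assms(2) by (intro holomorphic_intros)
  have "(deriv ^^ n) (\<lambda>z. a z + c * b z) 0 = (deriv ^^ n) a 0 + (deriv ^^ n) (\<lambda>z. c * b z) 0"
    by (rule higher_deriv_add[OF assms(1) cb]) auto
  also have "(deriv ^^ n) (\<lambda>z. c * b z) 0 = c * (deriv ^^ n) b 0"
    by (rule higher_deriv_cmult[OF assms(2)]) auto
  finally show ?thesis by (simp add: coef_def add_divide_distrib)
qed

lemma coef_cong:
  assumes "\<forall>z\<in>unit_disk. f z = g z"
  shows "coef f n = coef g n"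
proof -
  have "eventually (\<lambda>x. f x = g x) (nhds 0)"
    using assms by (intro eventually_nhds_in_open[of unit_disk, THEN eventually_mono]) auto
  then show ?thesis by (simp add: coef_def higher_deriv_cong_ev)
qed

lemma hconv_cong:
  assumes "\<forall>z\<in>unit_disk. f z = f' z" and "\<forall>z\<in>unit_disk. F z = F' z"
  shows "hconv f F = hconv f' F'"
  using coef_cong[OF assms(1)] coef_cong[OF assms(2)] by (simp add: hconv_def fun_eq_iff)

lemma hconv_commute: "hconv f F = hconv F f"
  by (simp add: hconv_def fun_eq_iff mult.commute mult.left_commute)

lemma hconv_add_cmult_left:
  assumes a: "a holomorphic_on unit_disk" and b: "b holomorphic_on unit_disk"
    and F: "F holomorphic_on unit_disk" and z: "z \<in> unit_disk"
  shows "hconv (\<lambda>z. a z + \<alpha> * b z) F z = hconv a F z + \<alpha> * hconv b F z"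
proof -
  let ?t = "\<lambda>f n. coef f n * coef F n * z ^ n"
  have "norm z < 1" using z by simp
  then have "(\<lambda>n. ?t a n + \<alpha> * ?t b n) sums ((\<Sum>n. ?t a n) + \<alpha> * (\<Sum>n. ?t b n))"
    by (intro sums_add sums_mult summable_sums summable_coef_mult_coef_power a b F)
  moreover have "(\<lambda>n. ?t a n + \<alpha> * ?t b n) = ?t (\<lambda>z. a z + \<alpha> * b z)"
    by (simp add: coef_add_cmult[OF a b] fun_eq_iff algebra_simps)
  ultimately show ?thesis using z by (simp add: hconv_def sums_iff)
qed

lemma hconv_add_cmult:
  assumes a: "a holomorphic_on unit_disk" and b: "b holomorphic_on unit_disk"
    and c: "c holomorphic_on unit_disk" and d: "d holomorphic_on unit_disk"
    and z: "z \<in> unit_disk"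
  shows "hconv (\<lambda>z. a z + \<alpha> * b z) (\<lambda>z. c z + \<beta> * d z) z =
         hconv a c z + \<beta> * hconv a d z + \<alpha> * hconv b c z + \<alpha> * \<beta> * hconv b d z"
proof -
  have cd: "(\<lambda>z. c z + \<beta> * d z) holomorphic_on unit_disk" using c d by (intro holomorphic_intros)
  have "hconv f (\<lambda>z. c z + \<beta> * d z) z = hconv f c z + \<beta> * hconv f d z"
    if "f holomorphic_on unit_disk" for f
    using hconv_add_cmult_left[OF c d that z] by (simp add: hconv_commute)
  then show ?thesis
    using hconv_add_cmult_left[OF a b cd z] a b by (simp add: algebra_simps)
qed

lemma harm_holomorphic:
  assumes "(h, g) \<in> harm G"
  shows "h holomorphic_on unit_disk" and "g holomorphic_on unit_disk"
  using assms by (auto simp: harm_def)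

lemma harmE:
  assumes "(h, g) \<in> harm G" and "cmod \<epsilon> = 1"
  obtains k where "k \<in> G" and "\<forall>z\<in>unit_disk. k z = h z + \<epsilon> * g z"
  using assms by (auto simp: harm_def mem_D_def)

lemma mem_D_cong: "mem_D f G \<Longrightarrow> (\<And>z. z \<in> unit_disk \<Longrightarrow> f z = g z) \<Longrightarrow> mem_D g G"
  by (auto simp: mem_D_def)

text \<open>Holomorphy of \<open>h\<close> and \<open>g\<close> is recovered from \<open>h \<pm> g \<in> \<G>\<close>.\<close>

lemma harmI:
  assumes G: "G \<subseteq> classS"
    and mem: "\<And>\<epsilon>::complex. cmod \<epsilon> = 1 \<Longrightarrow> mem_D (\<lambda>z. h z + \<epsilon> * g z) G"
  shows "(h, g) \<in> harm G"
proof -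
  obtain k1 where k1: "k1 \<in> G" "\<forall>z\<in>unit_disk. k1 z = h z + 1 * g z"
    using mem[of 1] by (auto simp: mem_D_def)
  obtain k2 where k2: "k2 \<in> G" "\<forall>z\<in>unit_disk. k2 z = h z + (-1) * g z"
    using mem[of "-1"] by (auto simp: mem_D_def)
  have "k1 holomorphic_on unit_disk" "k2 holomorphic_on unit_disk"
    using G k1 k2 by (auto simp: classS_def)
  then have "(\<lambda>z. (k1 z + k2 z) / 2) holomorphic_on unit_disk"
    and "(\<lambda>z. (k1 z - k2 z) / 2) holomorphic_on unit_disk"
    by (auto intro!: holomorphic_intros)
  then have "h holomorphic_on unit_disk" and "g holomorphic_on unit_disk"
    by (auto intro: holomorphic_transform[of "\<lambda>z. (k1 z + k2 z) / 2"]
        holomorphic_transform[of "\<lambda>z. (k1 z - k2 z) / 2"] simp: k1 k2)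
  then show ?thesis using mem by (simp add: harm_def)
qed

lemma hconvH_self_mem_harm:
  assumes G: "G \<subseteq> classS" and closed: "\<forall>f\<in>G. \<forall>F\<in>G. mem_D (hconv f F) G"
    and p: "p \<in> harm G"
  shows "hconvH p p \<in> harm G"
proof -
  obtain h g where hg: "p = (h, g)" by (cases p)
  have p: "(h, g) \<in> harm G" using p hg by simp
  note hol = harm_holomorphic[OF p]
  have "(hconv h h, hconv g g) \<in> harm G"
  proof (rule harmI[OF G])
    fix \<epsilon> :: complex assume "cmod \<epsilon> = 1"
    define \<eta> where "\<eta> = csqrt (- \<epsilon>)"
    have \<eta>: "cmod \<eta> = 1" "cmod (- \<eta>) = 1" using \<open>cmod \<epsilon> = 1\<close> by (auto simp: \<eta>_def)
    have "\<eta> * \<eta> = - \<epsilon>" unfolding \<eta>_def by (metis power2_csqrt power2_eq_square)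
    obtain k1 where k1: "k1 \<in> G" "\<forall>z\<in>unit_disk. k1 z = h z + \<eta> * g z"
      using harmE[OF p \<eta>(1)] .
    obtain k2 where k2: "k2 \<in> G" "\<forall>z\<in>unit_disk. k2 z = h z + (- \<eta>) * g z"
      using harmE[OF p \<eta>(2)] .
    have k1k2: "hconv k1 k2 = hconv (\<lambda>z. h z + \<eta> * g z) (\<lambda>z. h z + (- \<eta>) * g z)"
      using k1 k2 by (intro hconv_cong) auto
    have "hconv k1 k2 z = hconv h h z + \<epsilon> * hconv g g z" if "z \<in> unit_disk" for z
    proof -
      have "hconv k1 k2 z = hconv h h z + (- \<eta>) * hconv h g z + \<eta> * hconv g h z
          + \<eta> * (- \<eta>) * hconv g g z"
        unfolding k1k2 by (rule hconv_add_cmult[OF hol hol that])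
      also have "\<dots> = hconv h h z + \<epsilon> * hconv g g z"
        using \<open>\<eta> * \<eta> = - \<epsilon>\<close> hconv_commute[of h g] by (simp add: algebra_simps)
      finally show ?thesis .
    qed
    moreover have "mem_D (hconv k1 k2) G" using closed k1 k2 by blast
    ultimately show "mem_D (\<lambda>z. hconv h h z + \<epsilon> * hconv g g z) G"
      by (auto intro: mem_D_cong)
  qed
  then show ?thesis by (simp add: hconvH_def hg)
qed

lemma hconvH_mem_harm:
  assumes G: "G \<subseteq> classS" and closed: "\<forall>f\<in>G. \<forall>F\<in>G. mem_D (hconv f F) G"
    and avg: "\<forall>f\<in>G. \<forall>F\<in>G. mem_D (\<lambda>z. (f z + F z) / 2) G"
    and p1: "p1 \<in> harm G" and p2: "p2 \<in> harm G"
  shows "hconvH p1 p2 \<in> harm G"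
proof -
  obtain h1 g1 h2 g2 where hg: "p1 = (h1, g1)" "p2 = (h2, g2)" by (cases p1, cases p2)
  have p1: "(h1, g1) \<in> harm G" and p2: "(h2, g2) \<in> harm G" using p1 p2 hg by simp_all
  note hol = harm_holomorphic[OF p1] harm_holomorphic[OF p2]
  have "(hconv h1 h2, hconv g1 g2) \<in> harm G"
  proof (rule harmI[OF G])
    fix \<epsilon> :: complex assume \<epsilon>: "cmod \<epsilon> = 1"
    have conv_in_G: "\<exists>m\<in>G. \<forall>z\<in>unit_disk. m z = hconv h1 h2 z + \<sigma> * \<epsilon> * hconv h1 g2 z
        + \<sigma> * hconv g1 h2 z + \<epsilon> * hconv g1 g2 z"
      if \<sigma>: "\<sigma> = 1 \<or> \<sigma> = -1" for \<sigma> :: complex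
    proof -
      have "cmod \<sigma> = 1" "cmod (\<sigma> * \<epsilon>) = 1" using \<sigma> \<epsilon> by (auto simp: norm_mult)
      then obtain k1 k2 where k1: "k1 \<in> G" "\<forall>z\<in>unit_disk. k1 z = h1 z + \<sigma> * g1 z"
        and k2: "k2 \<in> G" "\<forall>z\<in>unit_disk. k2 z = h2 z + (\<sigma> * \<epsilon>) * g2 z"
        using harmE[OF p1] harmE[OF p2] by metis
      obtain m where m: "m \<in> G" "\<forall>z\<in>unit_disk. m z = hconv k1 k2 z"
        using closed k1(1) k2(1) unfolding mem_D_def by blast
      have k1k2: "hconv k1 k2 = hconv (\<lambda>z. h1 z + \<sigma> * g1 z) (\<lambda>z. h2 z + (\<sigma> * \<epsilon>) * g2 z)"
        using k1 k2 by (intro hconv_cong) auto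
      have "\<sigma> * \<sigma> = 1" using \<sigma> by auto
      have "m z = hconv h1 h2 z + \<sigma> * \<epsilon> * hconv h1 g2 z + \<sigma> * hconv g1 h2 z
          + \<epsilon> * hconv g1 g2 z" if "z \<in> unit_disk" for z
      proof -
        have "m z = hconv h1 h2 z + (\<sigma> * \<epsilon>) * hconv h1 g2 z + \<sigma> * hconv g1 h2 z
            + \<sigma> * (\<sigma> * \<epsilon>) * hconv g1 g2 z"
          unfolding m(2)[rule_format, OF that] k1k2 by (rule hconv_add_cmult[OF hol that])
        then show ?thesis by (simp add: mult.assoc[symmetric] \<open>\<sigma> * \<sigma> = 1\<close>)
      qed
      then show ?thesis using m(1) by blast
    qed
    obtain m1 m2 where m1: "m1 \<in> G" "\<forall>z\<in>unit_disk. m1 z = hconv h1 h2 z + \<epsilon> * hconv h1 g2 z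
        + hconv g1 h2 z + \<epsilon> * hconv g1 g2 z"
      and m2: "m2 \<in> G" "\<forall>z\<in>unit_disk. m2 z = hconv h1 h2 z - \<epsilon> * hconv h1 g2 z
        - hconv g1 h2 z + \<epsilon> * hconv g1 g2 z"
      using conv_in_G[of 1] conv_in_G[of "-1"] by auto
    have "mem_D (\<lambda>z. (m1 z + m2 z) / 2) G" using avg m1 m2 by blast
    then show "mem_D (\<lambda>z. hconv h1 h2 z + \<epsilon> * hconv g1 g2 z) G"
      by (rule mem_D_cong) (simp add: m1 m2 field_simps)
  qed
  then show ?thesis by (simp add: hconvH_def hg)
qed

theorem theorem2p9:
  fixes G :: "(complex \<Rightarrow> complex) set"
  assumes "G \<subseteq> classS"
    and "\<forall>f\<in>G. \<forall>F\<in>G. mem_D (hconv f F) G"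
  shows "(\<forall>p\<in>harm G. hconvH p p \<in> harm G) \<and>
         ((\<forall>f\<in>G. \<forall>F\<in>G. mem_D (\<lambda>z. (f z + F z) / 2) G) \<longrightarrow>
            (\<forall>p1\<in>harm G. \<forall>p2\<in>harm G. hconvH p1 p2 \<in> harm G))"
  using hconvH_self_mem_harm[OF assms] hconvH_mem_harm[OF assms] by blast

end
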